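(* Let $G$ be a connected graph. Define an auxiliary graph $\Gamma$ whose vertex set is $E(G)$, where two distinct edges of $G$ are adjacent in $\Gamma$ if and only if they have the form $vw$ and $vz$ (sharing the endpoint $v$) with $w$ and $z$ non-adjacent in $G$. Let $E_1,\dots,E_k$ be the vertex sets of the connected components of $\Gamma$ (a partition of $E(G)$). Then each $E_i$ is exactly the set of edges of $G$ that belong to bicliques whose corresponding vertices lie in one and the same connected component of $KB_e(G)$, and this gives a bijection between $\{E_1,\dots,E_k\}$ and the connected components of $KB_e(G)$. In particular, $KB_e(G)$ is connected if and only if $k=1$, i.e. $E_1=E(G)$.
   Context: All graphs are finite, simple and undirected. A biclique of a graph $G$ is a maximal (with respect to inclusion) induced subgraph of $G$ that is a complete bipartite graph $K_{p,q}$ with $p,q\ge 1$. The edge-biclique graph $KB_e(G)$ is the graph with one vertex for each biclique of $G$, in which two distinct vertices are adjacent if and only if the corresponding bicliques of $G$ have at least one edge in common. *)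

theory Defs
  imports Main
begin

definition simple_graph :: "'v set \<Rightarrow> ('v \<Rightarrow> 'v \<Rightarrow> bool) \<Rightarrow> bool" where
  "simple_graph V E \<longleftrightarrow> finite V \<and> (\<forall>x y. E x y \<longrightarrow> x \<in> V \<and> y \<in> V)
     \<and> (\<forall>x y. E x y \<longrightarrow> E y x) \<and> (\<forall>x. \<not> E x x)"

definition reach :: "'v set \<Rightarrow> ('v \<Rightarrow> 'v \<Rightarrow> bool) \<Rightarrow> 'v \<Rightarrow> 'v \<Rightarrow> bool" where
  "reach V R = (\<lambda>x y. x \<in> V \<and> y \<in> V \<and> R x y)\<^sup>*\<^sup>*"

definition components :: "'v set \<Rightarrow> ('v \<Rightarrow> 'v \<Rightarrow> bool) \<Rightarrow> 'v set set" where
  "components V R = {{y \<in> V. reach V R x y} | x. x \<in> V}"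

definition connected_graph :: "'v set \<Rightarrow> ('v \<Rightarrow> 'v \<Rightarrow> bool) \<Rightarrow> bool" where
  "connected_graph V R \<longleftrightarrow> V \<noteq> {} \<and> (\<forall>x\<in>V. \<forall>y\<in>V. reach V R x y)"

definition edges :: "'v set \<Rightarrow> ('v \<Rightarrow> 'v \<Rightarrow> bool) \<Rightarrow> 'v set set" where
  "edges V E = {{u, v} | u v. u \<in> V \<and> v \<in> V \<and> E u v}"

definition induces_complete_bipartite :: "('v \<Rightarrow> 'v \<Rightarrow> bool) \<Rightarrow> 'v set \<Rightarrow> bool" where
  "induces_complete_bipartite E B \<longleftrightarrow>
     (\<exists>X Y. X \<noteq> {} \<and> Y \<noteq> {} \<and> X \<inter> Y = {} \<and> B = X \<union> Y
        \<and> (\<forall>x\<in>X. \<forall>y\<in>Y. E x y)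
        \<and> (\<forall>x\<in>X. \<forall>x'\<in>X. \<not> E x x')
        \<and> (\<forall>y\<in>Y. \<forall>y'\<in>Y. \<not> E y y'))"

definition biclique :: "'v set \<Rightarrow> ('v \<Rightarrow> 'v \<Rightarrow> bool) \<Rightarrow> 'v set \<Rightarrow> bool" where
  "biclique V E B \<longleftrightarrow> B \<subseteq> V \<and> induces_complete_bipartite E B
     \<and> (\<forall>B'. B \<subseteq> B' \<and> B' \<subseteq> V \<and> induces_complete_bipartite E B' \<longrightarrow> B' = B)"

definition bicliques :: "'v set \<Rightarrow> ('v \<Rightarrow> 'v \<Rightarrow> bool) \<Rightarrow> 'v set set" where
  "bicliques V E = {B. biclique V E B}"

definition biclique_edges :: "('v \<Rightarrow> 'v \<Rightarrow> bool) \<Rightarrow> 'v set \<Rightarrow> 'v set set" where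
  "biclique_edges E B = {{u, v} | u v. u \<in> B \<and> v \<in> B \<and> E u v}"

definition KBe_adj :: "('v \<Rightarrow> 'v \<Rightarrow> bool) \<Rightarrow> 'v set \<Rightarrow> 'v set \<Rightarrow> bool" where
  "KBe_adj E B B' \<longleftrightarrow> B \<noteq> B' \<and> biclique_edges E B \<inter> biclique_edges E B' \<noteq> {}"

definition Gamma_adj :: "('v \<Rightarrow> 'v \<Rightarrow> bool) \<Rightarrow> 'v set \<Rightarrow> 'v set \<Rightarrow> bool" where
  "Gamma_adj E e f \<longleftrightarrow> e \<noteq> f \<and> (\<exists>v w z. e = {v, w} \<and> f = {v, z} \<and> \<not> E w z)"

end

theory Submission
  imports Defs
begin

text \<open>
  Every edge lies in a biclique; two edges of one biclique are joined in \<open>\<Gamma>\<close> (move one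
  endpoint at a time inside the bipartition); and two \<open>\<Gamma>\<close>-adjacent edges \<open>vw, vz\<close> span an
  induced star \<open>K\<^sub>1\<^sub>,\<^sub>2\<close>, hence lie in a common biclique. So the relation ``edge \<open>e\<close> belongs to
  biclique \<open>B\<close>'' links paths in \<open>\<Gamma>\<close> to paths in \<open>KB\<^sub>e(G)\<close> in both directions, and taking the
  union of the edge sets of the bicliques in a component of \<open>KB\<^sub>e(G)\<close> is a bijection onto the
  components of \<open>\<Gamma>\<close>. This is an instance of a general correspondence between the components of
  two graphs linked by such a covering relation.
\<close>

definition component :: "'v set \<Rightarrow> ('v \<Rightarrow> 'v \<Rightarrow> bool) \<Rightarrow> 'v \<Rightarrow> 'v set" where
  "component V R x = {y \<in> V. reach V R x y}"

lemma components_eq_image_component: "components V R = component V R ` V"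
  unfolding components_def component_def by blast

lemma reach_refl: "reach V R x x"
  unfolding reach_def by simp

lemma reach_step: "x \<in> V \<Longrightarrow> y \<in> V \<Longrightarrow> R x y \<Longrightarrow> reach V R x y"
  unfolding reach_def by (simp add: r_into_rtranclp)

lemma reach_trans: "reach V R x y \<Longrightarrow> reach V R y z \<Longrightarrow> reach V R x z"
  unfolding reach_def by (rule rtranclp_trans)

lemma reach_induct [consumes 1, case_names refl step]:
  assumes "reach V R x y"
    and "P x"
    and "\<And>y z. reach V R x y \<Longrightarrow> y \<in> V \<Longrightarrow> z \<in> V \<Longrightarrow> R y z \<Longrightarrow> P y \<Longrightarrow> P z"
  shows "P y"
  using assms(1)[unfolded reach_def]
proof (induction rule: rtranclp_induct)
  case (step y z)
  then show ?case using assms(3) by (simp add: reach_def)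
qed (fact assms(2))

lemma component_eq_iff:
  "component V R x = component V R y \<longleftrightarrow> reach V R x y \<and> reach V R y x"
  if "x \<in> V" "y \<in> V"
  using that reach_refl[of V R] reach_trans[of V R] unfolding component_def by blast

lemma components_eq_singleton_iff_card: "components V R = {V} \<longleftrightarrow> card (components V R) = 1"
proof
  assume "card (components V R) = 1"
  then obtain K where K: "components V R = {K}"
    using card_1_singletonE by blast
  then have "K \<subseteq> V"
    unfolding components_def by auto
  moreover have "x \<in> K" if "x \<in> V" for x
  proof -
    have "component V R x = K"
      using K that unfolding components_eq_image_component by blast
    then show ?thesis
      using that reach_refl[of V R x] unfolding component_def by blast
  qed
  ultimately show "components V R = {V}"
    using K by blast
qed simp

lemma connected_graph_iff_components: "connected_graph V R \<longleftrightarrow> components V R = {V}"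
proof
  assume "connected_graph V R"
  then have "V \<noteq> {}" "\<forall>x\<in>V. component V R x = V"
    unfolding connected_graph_def component_def by auto
  then show "components V R = {V}"
    unfolding components_eq_image_component by auto
next
  assume comps: "components V R = {V}"
  then have "V \<noteq> {}"
    unfolding components_eq_image_component by auto
  moreover have "component V R x = V" if "x \<in> V" for x
    using comps that unfolding components_eq_image_component by blast
  ultimately show "connected_graph V R"
    unfolding connected_graph_def component_def by blast
qed

text \<open>
  The first graph plays the role of \<open>KB\<^sub>e(G)\<close>, the second that of \<open>\<Gamma>\<close>, and \<open>L a\<close> the edge set
  of the biclique \<open>a\<close>. No symmetry of \<open>R\<close> or \<open>S\<close> is needed.
\<close>

locale covering_correspondence =
  fixes A :: "'a set" and R :: "'a \<Rightarrow> 'a \<Rightarrow> bool"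
    and C :: "'c set" and S :: "'c \<Rightarrow> 'c \<Rightarrow> bool"
    and L :: "'a \<Rightarrow> 'c set"
  assumes L_subset: "a \<in> A \<Longrightarrow> L a \<subseteq> C"
    and L_nonempty: "a \<in> A \<Longrightarrow> L a \<noteq> {}"
    and L_cover: "c \<in> C \<Longrightarrow> \<exists>a\<in>A. c \<in> L a"
    and adj_overlap: "a \<in> A \<Longrightarrow> b \<in> A \<Longrightarrow> R a b \<Longrightarrow> L a \<inter> L b \<noteq> {}"
    and overlap_reach: "a \<in> A \<Longrightarrow> b \<in> A \<Longrightarrow> c \<in> L a \<Longrightarrow> c \<in> L b \<Longrightarrow> reach A R a b"
    and adj_common: "c \<in> C \<Longrightarrow> d \<in> C \<Longrightarrow> S c d \<Longrightarrow> \<exists>a\<in>A. c \<in> L a \<and> d \<in> L a"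
    and L_reach: "a \<in> A \<Longrightarrow> c \<in> L a \<Longrightarrow> d \<in> L a \<Longrightarrow> reach C S c d"
begin

lemma reach_imp_L_reach:
  assumes "reach A R a b" "a \<in> A" "c \<in> L a" "d \<in> L b"
  shows "reach C S c d"
  using assms(1,4)
proof (induction arbitrary: d rule: reach_induct)
  case refl
  then show ?case using L_reach assms(2,3) by blast
next
  case (step b b')
  obtain h where "h \<in> L b" "h \<in> L b'"
    using adj_overlap[OF step(2-4)] by blast
  then show ?case
    using step(5) L_reach[OF step(3)] step(6) by (blast intro: reach_trans)
qed

lemma L_reach_imp_reach:
  assumes "reach C S c d" "a \<in> A" "c \<in> L a" "b \<in> A" "d \<in> L b"
  shows "reach A R a b"
  using assms(1,4,5)
proof (induction arbitrary: b rule: reach_induct)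
  case refl
  then show ?case using overlap_reach assms(2,3) by blast
next
  case (step d d')
  obtain a' where "a' \<in> A" "d \<in> L a'" "d' \<in> L a'"
    using adj_common[OF step(2-4)] by blast
  then show ?case
    using step(5) overlap_reach step(6,7) by (blast intro: reach_trans)
qed

lemma Union_L_component:
  assumes "a \<in> A" "c \<in> L a"
  shows "\<Union> (L ` component A R a) = component C S c"
proof
  show "\<Union> (L ` component A R a) \<subseteq> component C S c"
  proof
    fix d assume "d \<in> \<Union> (L ` component A R a)"
    then obtain b where "b \<in> A" "reach A R a b" "d \<in> L b"
      unfolding component_def by blast
    then show "d \<in> component C S c"
      using reach_imp_L_reach[OF _ assms] L_subset unfolding component_def by blast
  qed
  show "component C S c \<subseteq> \<Union> (L ` component A R a)"
  proof
    fix d assume "d \<in> component C S c"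
    then have "d \<in> C" "reach C S c d"
      unfolding component_def by blast+
    moreover obtain b where "b \<in> A" "d \<in> L b"
      using L_cover \<open>d \<in> C\<close> by blast
    ultimately show "d \<in> \<Union> (L ` component A R a)"
      using L_reach_imp_reach[OF _ assms] unfolding component_def by blast
  qed
qed

lemma Union_L_component_mem_components:
  assumes "a \<in> A"
  shows "\<Union> (L ` component A R a) \<in> components C S"
proof -
  obtain c where "c \<in> L a"
    using L_nonempty assms by blast
  then show ?thesis
    using Union_L_component assms L_subset unfolding components_eq_image_component by blast
qed

theorem bij_betw_components: "bij_betw (\<lambda>K. \<Union> (L ` K)) (components A R) (components C S)"
proof (rule bij_betw_imageI)
  show "inj_on (\<lambda>K. \<Union> (L ` K)) (components A R)"
  proof (rule inj_onI)
    fix K K' assume "K \<in> components A R" "K' \<in> components A R"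
      and eq: "\<Union> (L ` K) = \<Union> (L ` K')"
    then obtain a b where ab: "a \<in> A" "b \<in> A" and K: "K = component A R a" "K' = component A R b"
      unfolding components_eq_image_component by blast
    obtain c d where cd: "c \<in> L a" "d \<in> L b"
      using L_nonempty ab by blast
    have "c \<in> C" "d \<in> C"
      using L_subset ab cd by blast+
    moreover have "component C S c = component C S d"
      using eq K Union_L_component[OF ab(1) cd(1)] Union_L_component[OF ab(2) cd(2)] by simp
    ultimately have "reach C S c d" "reach C S d c"
      by (simp_all add: component_eq_iff)
    then show "K = K'"
      unfolding K component_eq_iff[OF ab] using L_reach_imp_reach ab cd by blast
  qed
  show "(\<lambda>K. \<Union> (L ` K)) ` components A R = components C S"
  proof
    show "(\<lambda>K. \<Union> (L ` K)) ` components A R \<subseteq> components C S"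
      using Union_L_component_mem_components unfolding components_eq_image_component by blast
    show "components C S \<subseteq> (\<lambda>K. \<Union> (L ` K)) ` components A R"
    proof
      fix K assume "K \<in> components C S"
      then obtain c where "c \<in> C" "K = component C S c"
        unfolding components_eq_image_component by blast
      moreover obtain a where "a \<in> A" "c \<in> L a"
        using L_cover \<open>c \<in> C\<close> by blast
      ultimately show "K \<in> (\<lambda>K. \<Union> (L ` K)) ` components A R"
        using Union_L_component unfolding components_eq_image_component by blast
    qed
  qed
qed

end

lemma simple_graph_finite: "simple_graph V E \<Longrightarrow> finite V"
  and simple_graph_vertices: "simple_graph V E \<Longrightarrow> E x y \<Longrightarrow> x \<in> V \<and> y \<in> V"
  and simple_graph_sym: "simple_graph V E \<Longrightarrow> E x y \<Longrightarrow> E y x"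
  and simple_graph_irrefl: "simple_graph V E \<Longrightarrow> \<not> E x x"
  unfolding simple_graph_def by blast+

lemma doubleton_mem_edges_iff:
  assumes "simple_graph V E"
  shows "{v, w} \<in> edges V E \<longleftrightarrow> E v w"
proof
  assume "{v, w} \<in> edges V E"
  then obtain a b where "{v, w} = {a, b}" "E a b"
    unfolding edges_def by auto
  then show "E v w"
    using simple_graph_sym[OF assms] by (auto simp: doubleton_eq_iff)
qed (use simple_graph_vertices[OF assms] in \<open>auto simp: edges_def\<close>)

lemma biclique_subset: "biclique V E B \<Longrightarrow> B \<subseteq> V"
  unfolding biclique_def by blast

lemma biclique_bipartition:
  assumes "biclique V E B"
  obtains X Y where "X \<noteq> {}" "Y \<noteq> {}" "B = X \<union> Y"
    "\<forall>x\<in>X. \<forall>y\<in>Y. E x y" "\<forall>x\<in>X. \<forall>x'\<in>X. \<not> E x x'" "\<forall>y\<in>Y. \<forall>y'\<in>Y. \<not> E y y'"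
  using assms unfolding biclique_def induces_complete_bipartite_def
  by (elim conjE exE) (rule that; assumption)

lemma biclique_edges_subset_edges: "biclique V E B \<Longrightarrow> biclique_edges E B \<subseteq> edges V E"
  using biclique_subset unfolding biclique_edges_def edges_def by blast

lemma biclique_edges_nonempty:
  assumes "biclique V E B"
  shows "biclique_edges E B \<noteq> {}"
proof (rule biclique_bipartition[OF assms])
  fix X Y assume "X \<noteq> {}" "Y \<noteq> {}" "B = X \<union> Y" "\<forall>x\<in>X. \<forall>y\<in>Y. E x y"
  then obtain x y where "x \<in> B" "y \<in> B" "E x y"
    by blast
  then show ?thesis
    unfolding biclique_edges_def by blast
qed

lemma ex_biclique_superset:
  assumes "finite V" "S \<subseteq> V" "induces_complete_bipartite E S"
  shows "\<exists>B. biclique V E B \<and> S \<subseteq> B"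
proof -
  let ?F = "{T. S \<subseteq> T \<and> T \<subseteq> V \<and> induces_complete_bipartite E T}"
  have "finite ?F"
    by (rule finite_subset[of _ "Pow V"]) (use assms(1) in auto)
  moreover have "S \<in> ?F"
    using assms(2,3) by simp
  ultimately obtain B where B: "B \<in> ?F" and max: "\<forall>T\<in>?F. B \<subseteq> T \<longrightarrow> B = T"
    using finite_has_maximal[of ?F] by blast
  have "biclique V E B"
    unfolding biclique_def
  proof (intro conjI allI impI)
    fix T assume "B \<subseteq> T \<and> T \<subseteq> V \<and> induces_complete_bipartite E T"
    then show "T = B"
      using max B by auto
  qed (use B in auto)
  then show ?thesis
    using B by auto
qed

lemma induces_complete_bipartite_star:
  assumes "v \<notin> W" "W \<noteq> {}" "\<not> E v v" "\<forall>w\<in>W. E v w" "\<forall>w\<in>W. \<forall>w'\<in>W. \<not> E w w'"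
  shows "induces_complete_bipartite E (insert v W)"
  unfolding induces_complete_bipartite_def
  using assms by (intro exI[of _ "{v}"] exI[of _ W]) auto

lemma star_in_biclique:
  assumes g: "simple_graph V E" and "v \<notin> W" "W \<noteq> {}" "\<forall>w\<in>W. E v w"
    and "\<forall>w\<in>W. \<forall>w'\<in>W. \<not> E w w'"
  shows "\<exists>B. biclique V E B \<and> (\<forall>w\<in>W. {v, w} \<in> biclique_edges E B)"
proof -
  have "insert v W \<subseteq> V"
    using assms(3,4) simple_graph_vertices[OF g] by blast
  then obtain B where "biclique V E B" "insert v W \<subseteq> B"
    using ex_biclique_superset[OF simple_graph_finite[OF g]] induces_complete_bipartite_star
      simple_graph_irrefl[OF g] assms(2-5) by metis
  then show ?thesis
    using assms(4) unfolding biclique_edges_def by blast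
qed

lemma edge_in_biclique:
  assumes g: "simple_graph V E" and "e \<in> edges V E"
  shows "\<exists>B. biclique V E B \<and> e \<in> biclique_edges E B"
proof -
  obtain u v where "e = {u, v}" "E u v"
    using assms(2) unfolding edges_def by blast
  moreover have "u \<notin> {v}"
    using \<open>E u v\<close> simple_graph_irrefl[OF g] by blast
  ultimately show ?thesis
    using star_in_biclique[OF g, of u "{v}"] simple_graph_irrefl[OF g] by auto
qed

lemma Gamma_adj_common_biclique:
  assumes g: "simple_graph V E" and "e \<in> edges V E" "f \<in> edges V E" "Gamma_adj E e f"
  shows "\<exists>B. biclique V E B \<and> e \<in> biclique_edges E B \<and> f \<in> biclique_edges E B"
proof -
  obtain v w z where vwz: "e = {v, w}" "f = {v, z}" "\<not> E w z"
    using assms(4) unfolding Gamma_adj_def by blast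
  with assms(2,3) have "E v w" "E v z"
    by (simp_all add: doubleton_mem_edges_iff[OF g])
  moreover have "v \<notin> {w, z}"
    using calculation simple_graph_irrefl[OF g] by blast
  moreover have "\<forall>x\<in>{w, z}. \<forall>x'\<in>{w, z}. \<not> E x x'"
    using vwz(3) simple_graph_irrefl[OF g] simple_graph_sym[OF g] by blast
  ultimately show ?thesis
    using star_in_biclique[OF g, of v "{w, z}"] vwz(1,2) by auto
qed

lemma Gamma_reach_pivot:
  assumes g: "simple_graph V E" and "E v w" "E v z" "w = z \<or> \<not> E w z"
  shows "reach (edges V E) (Gamma_adj E) {v, w} {v, z}"
proof (cases "w = z")
  case False
  with assms(2) simple_graph_irrefl[OF g] have "{v, w} \<noteq> {v, z}"
    by (auto simp: doubleton_eq_iff)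
  then have "Gamma_adj E {v, w} {v, z}"
    using False assms(4) unfolding Gamma_adj_def by blast
  then show ?thesis
    using assms(2,3) by (simp add: reach_step doubleton_mem_edges_iff[OF g])
qed (simp add: reach_refl)

lemma biclique_edges_Gamma_reach:
  assumes g: "simple_graph V E" and B: "biclique V E B"
    and "e \<in> biclique_edges E B" "f \<in> biclique_edges E B"
  shows "reach (edges V E) (Gamma_adj E) e f"
proof -
  obtain X Y where XY: "X \<noteq> {}" "Y \<noteq> {}" "B = X \<union> Y"
    "\<forall>x\<in>X. \<forall>y\<in>Y. E x y" "\<forall>x\<in>X. \<forall>x'\<in>X. \<not> E x x'" "\<forall>y\<in>Y. \<forall>y'\<in>Y. \<not> E y y'"
    by (rule biclique_bipartition[OF B])
  have across: "\<exists>x\<in>X. \<exists>y\<in>Y. h = {x, y}" if h: "h \<in> biclique_edges E B" for h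
  proof -
    obtain a b where ab: "h = {a, b}" "a \<in> B" "b \<in> B" "E a b"
      using h unfolding biclique_edges_def by blast
    then consider "a \<in> X" "b \<in> Y" | "a \<in> Y" "b \<in> X"
      using XY(3,5,6) by blast
    then show ?thesis
      using ab(1) by cases (auto simp: insert_commute)
  qed
  obtain x y where xy: "x \<in> X" "y \<in> Y" "e = {x, y}"
    using across[OF assms(3)] by blast
  obtain x' y' where xy': "x' \<in> X" "y' \<in> Y" "f = {x', y'}"
    using across[OF assms(4)] by blast
  have "reach (edges V E) (Gamma_adj E) {x, y} {x, y'}"
    using xy xy' XY(4,6) by (intro Gamma_reach_pivot[OF g]) auto
  moreover have "reach (edges V E) (Gamma_adj E) {y', x} {y', x'}"
    using xy xy' XY(4,5) simple_graph_sym[OF g] by (intro Gamma_reach_pivot[OF g]) auto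
  ultimately show ?thesis
    using xy(3) xy'(3) by (metis insert_commute reach_trans)
qed

lemma KBe_Gamma_covering_correspondence:
  assumes "simple_graph V E"
  shows "covering_correspondence (bicliques V E) (KBe_adj E) (edges V E) (Gamma_adj E)
           (biclique_edges E)"
proof
  fix B B' e
  assume "B \<in> bicliques V E" "B' \<in> bicliques V E" "e \<in> biclique_edges E B" "e \<in> biclique_edges E B'"
  then show "reach (bicliques V E) (KBe_adj E) B B'"
    unfolding KBe_adj_def by (cases "B = B'") (auto intro: reach_step simp: reach_refl)
qed (use assms in \<open>auto simp: bicliques_def KBe_adj_def biclique_edges_nonempty
      dest: biclique_edges_subset_edges edge_in_biclique Gamma_adj_common_biclique
      intro: biclique_edges_Gamma_reach\<close>)

theorem mainTheorem3:
  fixes V :: "'v set" and E :: "'v \<Rightarrow> 'v \<Rightarrow> bool"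
  assumes "simple_graph V E" and "connected_graph V E"
  shows "bij_betw (\<lambda>C. \<Union>B\<in>C. biclique_edges E B)
            (components (bicliques V E) (KBe_adj E))
            (components (edges V E) (Gamma_adj E))
       \<and> (connected_graph (bicliques V E) (KBe_adj E)
            \<longleftrightarrow> card (components (edges V E) (Gamma_adj E)) = 1)
       \<and> (connected_graph (bicliques V E) (KBe_adj E)
            \<longleftrightarrow> components (edges V E) (Gamma_adj E) = {edges V E})"
proof -
  interpret covering_correspondence "bicliques V E" "KBe_adj E" "edges V E" "Gamma_adj E"
    "biclique_edges E"
    using KBe_Gamma_covering_correspondence[OF assms(1)] .
  have bij: "bij_betw (\<lambda>C. \<Union>B\<in>C. biclique_edges E B)
      (components (bicliques V E) (KBe_adj E)) (components (edges V E) (Gamma_adj E))"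
    by (rule bij_betw_components)
  have connected_iff_card: "connected_graph (bicliques V E) (KBe_adj E)
      \<longleftrightarrow> card (components (edges V E) (Gamma_adj E)) = 1"
    unfolding connected_graph_iff_components components_eq_singleton_iff_card
    using bij_betw_same_card[OF bij] by simp
  then show ?thesis
    using bij by (simp add: components_eq_singleton_iff_card)
qed

end
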